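(* Let $\mu>0$, $\varepsilon>0$, and $z^0\in F$, and consider the iterates generated by Algorithm IP-FB$(z^0,\mu,\varepsilon)$ described in the context. Then: (i) at every iteration, the number of backtracking steps (reductions $\gamma_j\gets\beta\gamma_j$) is finite; (ii) at every iteration $j\geq1$, one has $z^j=\bar z^{j-1}$ and \[ q_\mu(z^j)=q_\mu(\bar z^{j-1})\leq q_\mu(z^{j-1})-\tfrac{1-\alpha}{2\gamma_{j-1}}\|\bar z^{j-1}-z^{j-1}\|^2, \] where $\gamma_{j-1}$ is the accepted stepsize of iteration $j-1$; (iii) every iterate $\bar z^j$ belongs to the sublevel set $\{z : q_\mu(z)\leq q_\mu(z^0)\}$, and $q_\mu(z^0)<\infty$.
   Context: Setting: $f:\mathbb{R}^n\to\mathbb{R}$ has locally Lipschitz continuous gradient; $g:\mathbb{R}^n\to\mathbb{R}\cup\{\infty\}$ is proper, lower semicontinuous, prox-bounded ($g+\frac{1}{2\gamma}\|\cdot\|^2$ bounded below for some $\gamma>0$; $\gamma_g\in(0,\infty]$ denotes the supremum of such $\gamma$), and continuous relative to $\operatorname{dom} g$ (whenever $\operatorname{dom} g\ni x^k\to x$, $g(x^k)\to g(x)$); $c:\mathbb{R}^n\to\mathbb{R}^m$ has locally Lipschitz continuous Jacobian. $q=f+g$, $\inf\{q(x): c(x)\le0\}\in\mathbb{R}$, $D=\{x: c(x)<0\}$, $F=\operatorname{dom} q\cap D\neq\emptyset$. The barrier $b:\mathbb{R}\to[0,\infty]$ has $\operatorname{dom} b=(-\infty,0)$, is twice continuously differentiable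 with $b'>0$ there, and $b(t)\to\infty$ as $t\to0^-$. For $\mu>0$: $f_\mu(z)=f(z)+\mu\sum_{i=1}^m b(c_i(z))$ ($=\infty$ outside $D$), $q_\mu=f_\mu+g$. $\operatorname{prox}_{\gamma g}(x)=\operatorname{argmin}_w\{g(w)+\frac{1}{2\gamma}\|w-x\|^2\}$, and $T_{\mu,\gamma}(z)=\operatorname{prox}_{\gamma g}(z-\gamma\nabla f_\mu(z))$ for $z\in D$. Algorithm IP-FB$(z^0,\mu,\varepsilon)$: inputs $z^0\in F$, $\mu>0$, $\varepsilon>0$; parameters $\gamma_0\in(0,\gamma_g)$, $\alpha,\beta\in(0,1)$. Set $j=0$ and start at step 2. Step 1 (only for $j\geq1$): set $\gamma_j\gets\gamma_{j-1}$ and $z^j\gets\bar z^{j-1}$. Step 2: compute some $\bar z^j\in T_{\mu,\gamma_j}(z^j)$. Step 3: if not all of the following hold: (a) $c(\bar z^j)<0$, (b) $q_\mu(\bar z^j)\leq q_\mu(z^j)-\frac{1-\alpha}{2\gamma_j}\|\bar z^j-z^j\|^2$, (c) $\|\nabla f_\mu(\bar z^j)-\nabla f_\mu(z^j)\|\leq\frac{\alpha}{\gamma_j}\|\bar z^j-z^j\|$, then set $\gamma_j\gets\beta\gamma_j$ and go back to Step 2. Step 4: if $\|\frac{1}{\gamma_j}(z^j-\bar z^j)-\nabla f_\mu(z^j)+\nabla f_\mu(\bar z^j)\|\leq\varepsilon$, return $\bar z^j$. Step 5: set $j\gets j+1$ and go to Step 1. *)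

theory Defs
  imports "HOL-Analysis.Analysis"
begin

definition loc_lipschitz :: "('a::metric_space \<Rightarrow> 'b::metric_space) \<Rightarrow> bool" where
  "loc_lipschitz F \<longleftrightarrow> (\<forall>x. \<exists>\<delta>>0. \<exists>L. L-lipschitz_on (ball x \<delta>) F)"

definition proper_fun :: "('a \<Rightarrow> ereal) \<Rightarrow> bool" where
  "proper_fun g \<longleftrightarrow> (\<exists>x. g x < \<infinity>) \<and> (\<forall>x. g x \<noteq> -\<infinity>)"

definition lsc_fun :: "('a::topological_space \<Rightarrow> ereal) \<Rightarrow> bool" where
  "lsc_fun g \<longleftrightarrow> (\<forall>X x. X \<longlonglongrightarrow> x \<longrightarrow> g x \<le> liminf (\<lambda>k. g (X k)))"

definition edom :: "('a \<Rightarrow> ereal) \<Rightarrow> 'a set" where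
  "edom g = {x. g x < \<infinity>}"

definition cont_rel_dom :: "('a::topological_space \<Rightarrow> ereal) \<Rightarrow> bool" where
  "cont_rel_dom g \<longleftrightarrow> (\<forall>X x. (\<forall>k. X k \<in> edom g) \<and> x \<in> edom g \<and> X \<longlonglongrightarrow> x
      \<longrightarrow> (\<lambda>k. g (X k)) \<longlonglongrightarrow> g x)"

definition prox_bdd_with :: "('a::real_normed_vector \<Rightarrow> ereal) \<Rightarrow> real \<Rightarrow> bool" where
  "prox_bdd_with g \<gamma> \<longleftrightarrow> (\<exists>B. \<forall>x. ereal B \<le> g x + ereal (norm x ^ 2 / (2 * \<gamma>)))"

definition prox_bounded :: "('a::real_normed_vector \<Rightarrow> ereal) \<Rightarrow> bool" where
  "prox_bounded g \<longleftrightarrow> (\<exists>\<gamma>>0. prox_bdd_with g \<gamma>)"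

definition prox_threshold :: "('a::real_normed_vector \<Rightarrow> ereal) \<Rightarrow> ereal" where
  "prox_threshold g = Sup {ereal \<gamma> | \<gamma>. \<gamma> > 0 \<and> prox_bdd_with g \<gamma>}"

definition prox :: "real \<Rightarrow> ('a::real_normed_vector \<Rightarrow> ereal) \<Rightarrow> 'a \<Rightarrow> 'a set" where
  "prox \<gamma> g x = {w. \<forall>u. g w + ereal (norm (w - x) ^ 2 / (2 * \<gamma>))
                         \<le> g u + ereal (norm (u - x) ^ 2 / (2 * \<gamma>))}"

definition strict_feas :: "('a \<Rightarrow> real ^ 'm) \<Rightarrow> 'a set" where
  "strict_feas c = {x. \<forall>i. c x $ i < 0}"

definition qmu :: "('a \<Rightarrow> real) \<Rightarrow> ('a \<Rightarrow> ereal) \<Rightarrow> (real \<Rightarrow> real) \<Rightarrow> ('a \<Rightarrow> real ^ 'm::finite)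
                   \<Rightarrow> real \<Rightarrow> 'a \<Rightarrow> ereal" where
  "qmu f g b c \<mu> z =
     (if z \<in> strict_feas c then ereal (f z + \<mu> * (\<Sum>i\<in>UNIV. b (c z $ i))) else \<infinity>) + g z"

(* \<nabla>f_\<mu>(z) = \<nabla>f(z) + \<mu> \<Sum>_i b'(c_i(z)) \<nabla>c_i(z), rows of the Jacobian Jc z are \<nabla>c_i(z) *)
definition gradfmu :: "('a \<Rightarrow> real ^ 'n) \<Rightarrow> (real \<Rightarrow> real) \<Rightarrow> ('a \<Rightarrow> real ^ 'm::finite)
                       \<Rightarrow> ('a \<Rightarrow> real ^ 'n ^ 'm) \<Rightarrow> real \<Rightarrow> 'a \<Rightarrow> real ^ 'n" where
  "gradfmu gradf db c Jc \<mu> z = gradf z + \<mu> *\<^sub>R (\<Sum>i\<in>UNIV. db (c z $ i) *\<^sub>R (Jc z $ i))"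

definition Tmap :: "('a::real_normed_vector \<Rightarrow> ereal) \<Rightarrow> ('a \<Rightarrow> 'a) \<Rightarrow> real \<Rightarrow> 'a \<Rightarrow> 'a set" where
  "Tmap g G \<gamma> z = prox \<gamma> g (z - \<gamma> *\<^sub>R G z)"

(* acceptance test of Step 3: (a), (b), (c); qm = q_\<mu>, G = \<nabla>f_\<mu> *)
definition ipfb_accept :: "('a \<Rightarrow> real ^ 'm) \<Rightarrow> ('a::real_normed_vector \<Rightarrow> ereal) \<Rightarrow> ('a \<Rightarrow> 'a)
                            \<Rightarrow> real \<Rightarrow> real \<Rightarrow> 'a \<Rightarrow> 'a \<Rightarrow> bool" where
  "ipfb_accept c qm G \<alpha> \<gamma> z zb \<longleftrightarrow>
     (\<forall>i. c zb $ i < 0)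
   \<and> qm zb \<le> qm z - ereal ((1 - \<alpha>) / (2 * \<gamma>) * norm (zb - z) ^ 2)
   \<and> norm (G zb - G z) \<le> \<alpha> / \<gamma> * norm (zb - z)"

definition ipfb_stop :: "('a::real_normed_vector \<Rightarrow> 'a) \<Rightarrow> real \<Rightarrow> real \<Rightarrow> 'a \<Rightarrow> 'a \<Rightarrow> bool" where
  "ipfb_stop G \<epsilon> \<gamma> z zb \<longleftrightarrow> norm ((1 / \<gamma>) *\<^sub>R (z - zb) - G z + G zb) \<le> \<epsilon>"

(* A (partial) execution of IP-FB(z0,\<mu>,\<epsilon>) consisting of the iterations j = 0,...,N-1:
   z j is the iterate z^j, zb j the accepted point \<bar>z^j, \<gamma> j the accepted stepsize \<gamma>_j.
   Iteration j starts with stepsize \<gamma>_0 (j = 0) or \<gamma>_{j-1} (j \<ge> 1), performs k backtracking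
   steps, each of which computed some candidate in T that failed the test, and then accepts.
   Iterations before the last one did not stop in Step 4. *)
definition ipfb_run :: "('a::real_normed_vector \<Rightarrow> ereal) \<Rightarrow> ('a \<Rightarrow> real ^ 'm) \<Rightarrow> ('a \<Rightarrow> ereal) \<Rightarrow> ('a \<Rightarrow> 'a)
     \<Rightarrow> real \<Rightarrow> real \<Rightarrow> real \<Rightarrow> real \<Rightarrow> 'a \<Rightarrow> nat
     \<Rightarrow> (nat \<Rightarrow> 'a) \<Rightarrow> (nat \<Rightarrow> 'a) \<Rightarrow> (nat \<Rightarrow> real) \<Rightarrow> bool" where
  "ipfb_run g c qm G \<alpha> \<beta> \<gamma>0 \<epsilon> z0 N z zb \<gamma> \<longleftrightarrow>
     z 0 = z0
   \<and> (\<forall>j. Suc j < N \<longrightarrow> z (Suc j) = zb j)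
   \<and> (\<forall>j<N. \<exists>k::nat.
          \<gamma> j = \<beta> ^ k * (if j = 0 then \<gamma>0 else \<gamma> (j - 1))
        \<and> (\<forall>i<k. \<exists>w \<in> Tmap g G (\<beta> ^ i * (if j = 0 then \<gamma>0 else \<gamma> (j - 1))) (z j).
                   \<not> ipfb_accept c qm G \<alpha> (\<beta> ^ i * (if j = 0 then \<gamma>0 else \<gamma> (j - 1))) (z j) w)
        \<and> zb j \<in> Tmap g G (\<gamma> j) (z j)
        \<and> ipfb_accept c qm G \<alpha> (\<gamma> j) (z j) (zb j))
   \<and> (\<forall>j. Suc j < N \<longrightarrow> \<not> ipfb_stop G \<epsilon> (\<gamma> j) (z j) (zb j))"

end

theory Submission
  imports Defs
begin

(* For 0 < gamma < gamma_g the prox objective of g is lower semicontinuous and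
   coercive, so T_{mu,gamma} is nonempty. Near a strictly feasible z, the gradient of f_mu is
   Lipschitz on a ball inside D (b' is C^1 and c stays away from 0 there). The prox inequality
   gives |w - z|^2 = O(gamma) for w in T_{mu,gamma}(z), so for small gamma every candidate lies
   in that ball, where the descent lemma yields the decrease test (b) and the Lipschitz bound
   the test (c) once 2 gamma L <= alpha; since beta^i gamma -> 0, backtracking stops. Parts
   (ii) and (iii) follow from the accepted decrease by induction over the iterations. *)

section \<open>Lipschitz continuity near a point\<close>

definition lipschitz_near :: "'a::metric_space \<Rightarrow> ('a \<Rightarrow> 'b::metric_space) \<Rightarrow> bool" where
  "lipschitz_near x F \<longleftrightarrow> (\<exists>r>0. \<exists>L. L-lipschitz_on (ball x r) F)"

lemma loc_lipschitz_iff_lipschitz_near: "loc_lipschitz F \<longleftrightarrow> (\<forall>x. lipschitz_near x F)"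
  unfolding loc_lipschitz_def lipschitz_near_def ..

lemma lipschitz_nearE:
  assumes "lipschitz_near x F"
  obtains r L where "r > 0" "L-lipschitz_on (ball x r) F"
  using assms unfolding lipschitz_near_def by blast

lemma lipschitz_near_shrink:
  assumes "lipschitz_near x F" "open S" "x \<in> S"
  obtains r L where "r > 0" "ball x r \<subseteq> S" "L-lipschitz_on (ball x r) F"
proof -
  obtain r L where "r > 0" and L: "L-lipschitz_on (ball x r) F"
    using lipschitz_nearE[OF assms(1)] by blast
  obtain s where "s > 0" "ball x s \<subseteq> S"
    using assms(2,3) open_contains_ball by blast
  moreover have "L-lipschitz_on (ball x (min r s)) F"
    by (rule lipschitz_on_subset[OF L]) auto
  moreover have "ball x (min r s) \<subseteq> S"
    using \<open>ball x s \<subseteq> S\<close> by auto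
  ultimately show thesis
    using that[of "min r s" L] \<open>r > 0\<close> by auto
qed

lemma lipschitz_near_add:
  fixes F G :: "'a::metric_space \<Rightarrow> 'b::real_normed_vector"
  assumes "lipschitz_near x F" "lipschitz_near x G"
  shows "lipschitz_near x (\<lambda>y. F y + G y)"
proof -
  obtain r L where "r > 0" and F: "L-lipschitz_on (ball x r) F"
    using lipschitz_nearE[OF assms(1)] by blast
  obtain s M where "s > 0" and G: "M-lipschitz_on (ball x s) G"
    using lipschitz_nearE[OF assms(2)] by blast
  have "(L + M)-lipschitz_on (ball x (min r s)) (\<lambda>y. F y + G y)"
    by (intro lipschitz_on_add lipschitz_on_subset[OF F] lipschitz_on_subset[OF G]) auto
  then show ?thesis
    unfolding lipschitz_near_def using \<open>r > 0\<close> \<open>s > 0\<close> by (metis min_less_iff_conj)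
qed

lemma lipschitz_near_const: "lipschitz_near x (\<lambda>y. c)"
  unfolding lipschitz_near_def using lipschitz_on_constant zero_less_one by blast

lemma lipschitz_near_sum:
  fixes F :: "'i \<Rightarrow> 'a::metric_space \<Rightarrow> 'b::real_normed_vector"
  assumes "\<And>i. i \<in> I \<Longrightarrow> lipschitz_near x (F i)"
  shows "lipschitz_near x (\<lambda>y. \<Sum>i\<in>I. F i y)"
  using assms
proof (induction I rule: infinite_finite_induct)
  case (infinite I)
  then show ?case by (simp add: lipschitz_near_const)
next
  case empty
  then show ?case by (simp add: lipschitz_near_const)
next
  case (insert i I)
  then show ?case by (simp add: lipschitz_near_add)
qed

lemma lipschitz_near_bounded:
  fixes F :: "'a::metric_space \<Rightarrow> 'b::real_normed_vector"
  assumes "lipschitz_near x F"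
  obtains r M where "r > 0" "\<And>y. y \<in> ball x r \<Longrightarrow> norm (F y) \<le> M"
proof -
  obtain r L where "r > 0" and L: "L-lipschitz_on (ball x r) F"
    using assms by (rule lipschitz_nearE)
  have "norm (F y) \<le> norm (F x) + L * r" if "y \<in> ball x r" for y
  proof -
    have "dist (F y) (F x) \<le> L * dist y x"
      using lipschitz_onD[OF L that] \<open>r > 0\<close> by simp
    also have "\<dots> \<le> L * r"
      using that lipschitz_on_nonneg[OF L] by (intro mult_left_mono) (auto simp: dist_commute)
    finally show ?thesis
      using norm_triangle_ineq2[of "F y" "F x"] by (simp add: dist_norm)
  qed
  then show thesis using that \<open>r > 0\<close> by blast
qed

lemma lipschitz_on_scaleR:
  fixes a :: "'a::metric_space \<Rightarrow> real" and u :: "'a \<Rightarrow> 'b::real_normed_vector"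
  assumes a: "La-lipschitz_on U a" and u: "Lu-lipschitz_on U u"
    and a_bound: "\<And>x. x \<in> U \<Longrightarrow> \<bar>a x\<bar> \<le> A" and u_bound: "\<And>x. x \<in> U \<Longrightarrow> norm (u x) \<le> M"
    and "U \<noteq> {}"
  shows "(A * Lu + M * La)-lipschitz_on U (\<lambda>x. a x *\<^sub>R u x)"
proof (rule lipschitz_onI)
  obtain x0 where "x0 \<in> U" using \<open>U \<noteq> {}\<close> by blast
  have "0 \<le> A" "0 \<le> M"
    using a_bound[OF \<open>x0 \<in> U\<close>] u_bound[OF \<open>x0 \<in> U\<close>]
    by (meson abs_ge_zero norm_ge_zero order_trans)+
  then show "0 \<le> A * Lu + M * La"
    using lipschitz_on_nonneg[OF a] lipschitz_on_nonneg[OF u] by simp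
  fix x y assume xy: "x \<in> U" "y \<in> U"
  have "a x *\<^sub>R u x - a y *\<^sub>R u y = a x *\<^sub>R (u x - u y) + (a x - a y) *\<^sub>R u y"
    by (simp add: algebra_simps)
  then have "dist (a x *\<^sub>R u x) (a y *\<^sub>R u y) = norm (a x *\<^sub>R (u x - u y) + (a x - a y) *\<^sub>R u y)"
    by (simp add: dist_norm)
  also have "\<dots> \<le> \<bar>a x\<bar> * dist (u x) (u y) + \<bar>a x - a y\<bar> * norm (u y)"
    using norm_triangle_ineq[of "a x *\<^sub>R (u x - u y)" "(a x - a y) *\<^sub>R u y"] by (simp add: dist_norm)
  also have "\<dots> \<le> A * (Lu * dist x y) + (La * dist x y) * M"
  proof (rule add_mono)
    show "\<bar>a x\<bar> * dist (u x) (u y) \<le> A * (Lu * dist x y)"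
      using a_bound[OF xy(1)] lipschitz_onD[OF u xy] \<open>0 \<le> A\<close> by (intro mult_mono) auto
    show "\<bar>a x - a y\<bar> * norm (u y) \<le> (La * dist x y) * M"
      using u_bound[OF xy(2)] lipschitz_onD[OF a xy] lipschitz_on_nonneg[OF a]
      by (intro mult_mono) (auto simp: dist_real_def)
  qed
  finally show "dist (a x *\<^sub>R u x) (a y *\<^sub>R u y) \<le> (A * Lu + M * La) * dist x y"
    by (simp add: algebra_simps)
qed

lemma lipschitz_near_scaleR:
  fixes a :: "'a::metric_space \<Rightarrow> real" and u :: "'a \<Rightarrow> 'b::real_normed_vector"
  assumes "lipschitz_near x a" "lipschitz_near x u"
  shows "lipschitz_near x (\<lambda>y. a y *\<^sub>R u y)"
proof -
  obtain r1 La where "r1 > 0" and a: "La-lipschitz_on (ball x r1) a"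
    using lipschitz_nearE[OF assms(1)] by blast
  obtain r2 Lu where "r2 > 0" and u: "Lu-lipschitz_on (ball x r2) u"
    using lipschitz_nearE[OF assms(2)] by blast
  obtain r3 A where "r3 > 0" and A: "\<And>y. y \<in> ball x r3 \<Longrightarrow> norm (a y) \<le> A"
    using lipschitz_near_bounded[OF assms(1)] by blast
  obtain r4 M where "r4 > 0" and M: "\<And>y. y \<in> ball x r4 \<Longrightarrow> norm (u y) \<le> M"
    using lipschitz_near_bounded[OF assms(2)] by blast
  define r where "r = min (min r1 r2) (min r3 r4)"
  have "r > 0" using \<open>r1 > 0\<close> \<open>r2 > 0\<close> \<open>r3 > 0\<close> \<open>r4 > 0\<close> by (simp add: r_def)
  have "(A * Lu + M * La)-lipschitz_on (ball x r) (\<lambda>y. a y *\<^sub>R u y)"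
  proof (rule lipschitz_on_scaleR)
    show "La-lipschitz_on (ball x r) a" by (rule lipschitz_on_subset[OF a]) (auto simp: r_def)
    show "Lu-lipschitz_on (ball x r) u" by (rule lipschitz_on_subset[OF u]) (auto simp: r_def)
    show "\<bar>a y\<bar> \<le> A" if "y \<in> ball x r" for y using A[of y] that by (auto simp: r_def)
    show "norm (u y) \<le> M" if "y \<in> ball x r" for y using M[of y] that by (auto simp: r_def)
    show "ball x r \<noteq> {}" using \<open>r > 0\<close> by simp
  qed
  then show ?thesis unfolding lipschitz_near_def using \<open>r > 0\<close> by blast
qed

lemma lipschitz_near_compose:
  assumes "lipschitz_near x F" "lipschitz_near (F x) H"
  shows "lipschitz_near x (\<lambda>y. H (F y))"
proof -
  obtain r L where "r > 0" and F: "L-lipschitz_on (ball x r) F"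
    using lipschitz_nearE[OF assms(1)] by blast
  obtain s M where "s > 0" and H: "M-lipschitz_on (ball (F x) s) H"
    using lipschitz_nearE[OF assms(2)] by blast
  define r' where "r' = min r (s / (L + 1))"
  have "L \<ge> 0" using lipschitz_on_nonneg[OF F] .
  then have "r' > 0" using \<open>r > 0\<close> \<open>s > 0\<close> unfolding r'_def by simp
  have "F ` ball x r' \<subseteq> ball (F x) s"
  proof clarify
    fix y assume "y \<in> ball x r'"
    then have "dist (F x) (F y) \<le> L * dist x y"
      using \<open>r' > 0\<close> by (intro lipschitz_onD[OF F]) (auto simp: r'_def)
    also have "\<dots> \<le> L * (s / (L + 1))"
      using \<open>y \<in> ball x r'\<close> \<open>L \<ge> 0\<close> by (intro mult_left_mono) (auto simp: r'_def)
    also have "\<dots> < s"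
      using \<open>L \<ge> 0\<close> \<open>s > 0\<close> by (simp add: field_simps)
    finally show "F y \<in> ball (F x) s" by simp
  qed
  then have "(M * L)-lipschitz_on (ball x r') (\<lambda>y. H (F y))"
    by (intro lipschitz_on_compose2 lipschitz_on_subset[OF F] lipschitz_on_subset[OF H])
      (auto simp: r'_def)
  then show ?thesis unfolding lipschitz_near_def using \<open>r' > 0\<close> by blast
qed

lemma bounded_linear_lipschitz_near:
  assumes "bounded_linear F"
  shows "lipschitz_near x F"
proof -
  obtain B where "B-lipschitz_on (ball x 1) F"
    using bounded_linear.lipschitz_boundE[OF assms] by blast
  then show ?thesis unfolding lipschitz_near_def by (meson zero_less_one)
qed

lemma lipschitz_near_derivative_bound:
  assumes "r > 0" and "\<And>y. y \<in> ball x r \<Longrightarrow> (F has_derivative F' y) (at y)"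
    and "\<And>y. y \<in> ball x r \<Longrightarrow> onorm (F' y) \<le> B"
  shows "lipschitz_near x F"
proof -
  have "(max B 0)-lipschitz_on (ball x r) F"
    using assms by (intro bounded_derivative_imp_lipschitz)
      (auto intro: has_derivative_at_withinI max.coboundedI1)
  then show ?thesis unfolding lipschitz_near_def using \<open>r > 0\<close> by blast
qed

lemma lipschitz_near_of_continuous_derivative:
  fixes h h' :: "real \<Rightarrow> real"
  assumes "open S" "t \<in> S"
    and "\<And>s. s \<in> S \<Longrightarrow> (h has_real_derivative h' s) (at s)" and "continuous_on S h'"
  shows "lipschitz_near t h"
proof -
  obtain r where "r > 0" "cball t r \<subseteq> S"
    using assms(1,2) open_contains_cball by blast
  then have "compact (h' ` cball t r)"
    by (intro compact_continuous_image continuous_on_subset[OF assms(4)]) auto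
  then obtain B where B: "\<forall>s\<in>cball t r. \<bar>h' s\<bar> \<le> B"
    by (auto dest!: compact_imp_bounded simp: bounded_iff)
  show ?thesis
  proof (rule lipschitz_near_derivative_bound[OF \<open>r > 0\<close>])
    fix s assume "s \<in> ball t r"
    then have "s \<in> S" using \<open>cball t r \<subseteq> S\<close> by auto
    then show "(h has_derivative (*) (h' s)) (at s)"
      using assms(3) by (simp add: has_field_derivative_def)
    have "onorm ((*) (h' s)) \<le> \<bar>h' s\<bar>"
      by (rule onorm_le) (simp add: abs_mult)
    moreover have "\<bar>h' s\<bar> \<le> B"
      using B \<open>s \<in> ball t r\<close> by auto
    ultimately show "onorm ((*) (h' s)) \<le> B"
      by linarith
  qed
qed

lemma lipschitz_near_of_lipschitz_jacobian:
  fixes c :: "real ^ 'n \<Rightarrow> real ^ 'm" and Jc :: "real ^ 'n \<Rightarrow> real ^ 'n ^ 'm"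
  assumes "\<And>x. (c has_derivative (\<lambda>h. Jc x *v h)) (at x)" and "loc_lipschitz Jc"
  shows "lipschitz_near x c"
proof -
  obtain r M where "r > 0" and M: "\<And>y. y \<in> ball x r \<Longrightarrow> norm (Jc y) \<le> M"
    using assms(2) lipschitz_near_bounded unfolding loc_lipschitz_iff_lipschitz_near by metis
  show ?thesis
  proof (rule lipschitz_near_derivative_bound[OF \<open>r > 0\<close> assms(1)])
    fix y assume "y \<in> ball x r"
    have "\<bar>Jc y $ i $ j\<bar> \<le> M" for i j
      using component_le_norm_cart[of "Jc y $ i" j] Finite_Cartesian_Product.norm_nth_le[of "Jc y" i]
        M[OF \<open>y \<in> ball x r\<close>] by linarith
    then show "onorm (\<lambda>h. Jc y *v h) \<le> real CARD('m) * real CARD('n) * M"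
      using onorm_le_matrix_component[of "Jc y" M] by simp
  qed
qed

(* The descent lemma with the constant L instead of the sharp L/2, which is all that is needed. *)
lemma lipschitz_gradient_upper_bound:
  fixes F :: "'a::real_inner \<Rightarrow> real"
  assumes deriv: "\<And>y. y \<in> ball z r \<Longrightarrow> (F has_derivative (\<lambda>h. G y \<bullet> h)) (at y)"
    and lip: "L-lipschitz_on (ball z r) G" and "w \<in> ball z r"
  shows "F w \<le> F z + G z \<bullet> (w - z) + L * norm (w - z) ^ 2"
proof -
  define d where "d = w - z"
  have segment: "z + t *\<^sub>R d \<in> ball z r" if "0 \<le> t" "t \<le> 1" for t
  proof -
    have "norm (t *\<^sub>R d) \<le> norm d" using that by (simp add: mult_left_le_one_le)
    also have "norm d < r" using \<open>w \<in> ball z r\<close> by (simp add: d_def dist_norm norm_minus_commute)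
    finally show ?thesis by (simp add: dist_norm)
  qed
  have "((\<lambda>t. F (z + t *\<^sub>R d)) has_real_derivative G (z + t *\<^sub>R d) \<bullet> d) (at t)"
    if "0 \<le> t" "t \<le> 1" for t
  proof -
    have "((\<lambda>t. z + t *\<^sub>R d) has_derivative (\<lambda>h. h *\<^sub>R d)) (at t)"
      by (auto intro!: derivative_eq_intros)
    from has_derivative_compose[OF this deriv[OF segment[OF that]]]
    show ?thesis by (simp add: has_field_derivative_def mult_commute_abs)
  qed
  then obtain s where s: "0 < s" "s < 1" "F (z + d) - F z = G (z + s *\<^sub>R d) \<bullet> d"
    using MVT2[of 0 1 "\<lambda>t. F (z + t *\<^sub>R d)" "\<lambda>t. G (z + t *\<^sub>R d) \<bullet> d"] by auto
  have "G (z + s *\<^sub>R d) \<bullet> d - G z \<bullet> d \<le> norm (G (z + s *\<^sub>R d) - G z) * norm d"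
    by (metis inner_diff_left norm_cauchy_schwarz)
  also have "\<dots> \<le> (L * (s * norm d)) * norm d"
  proof (rule mult_right_mono)
    have "norm (G (z + s *\<^sub>R d) - G (z + 0 *\<^sub>R d)) \<le> L * norm ((z + s *\<^sub>R d) - (z + 0 *\<^sub>R d))"
      using s by (intro lipschitz_on_normD[OF lip] segment) auto
    then show "norm (G (z + s *\<^sub>R d) - G z) \<le> L * (s * norm d)"
      using s by simp
  qed simp
  also have "\<dots> \<le> L * norm d ^ 2"
    using s lipschitz_on_nonneg[OF lip]
    by (simp add: power2_eq_square mult_left_le_one_le mult_right_mono mult_left_mono mult.assoc)
  finally show ?thesis using s(3) by (simp add: d_def)
qed

section \<open>The barrier objective\<close>

lemma open_strict_feas:
  fixes c :: "'a::topological_space \<Rightarrow> real ^ 'm"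
  assumes "continuous_on UNIV c"
  shows "open (strict_feas c)"
proof -
  have "strict_feas c = (\<Inter>i. {x. c x $ i < 0})"
    unfolding strict_feas_def by auto
  moreover have "open {x. c x $ i < 0}" for i
    by (intro open_Collect_less continuous_on_const continuous_on_component assms)
  ultimately show ?thesis by auto
qed

lemma gradfmu_lipschitz_near:
  fixes gradf :: "real ^ 'n \<Rightarrow> real ^ 'n"
    and c :: "real ^ 'n \<Rightarrow> real ^ 'm" and Jc :: "real ^ 'n \<Rightarrow> real ^ 'n ^ 'm"
    and db :: "real \<Rightarrow> real"
  assumes "loc_lipschitz gradf"
    and c_jac: "\<And>x. (c has_derivative (\<lambda>h. Jc x *v h)) (at x)" and "loc_lipschitz Jc"
    and db_C1: "\<exists>ddb. (\<forall>t<0. (db has_real_derivative ddb t) (at t)) \<and> continuous_on {..<0} ddb"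
    and "z \<in> strict_feas c"
  shows "lipschitz_near z (gradfmu gradf db c Jc \<mu>)"
proof -
  have component: "lipschitz_near v (\<lambda>v. v $ i)" for v :: "'x::real_normed_vector ^ 'k" and i
    by (rule bounded_linear_lipschitz_near[OF bounded_linear_vec_nth])
  have c: "lipschitz_near z c"
    using lipschitz_near_of_lipschitz_jacobian[OF c_jac \<open>loc_lipschitz Jc\<close>] .
  have Jc: "lipschitz_near z Jc"
    using \<open>loc_lipschitz Jc\<close> unfolding loc_lipschitz_iff_lipschitz_near ..
  have db: "lipschitz_near (c z $ i) db" for i
  proof -
    obtain ddb where "\<forall>t<0. (db has_real_derivative ddb t) (at t)" "continuous_on {..<0} ddb"
      using db_C1 by blast
    moreover have "c z $ i \<in> {..<0}"
      using \<open>z \<in> strict_feas c\<close> unfolding strict_feas_def by auto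
    ultimately show ?thesis
      by (intro lipschitz_near_of_continuous_derivative[where S = "{..<0}" and h' = ddb]) auto
  qed
  have "lipschitz_near z (\<lambda>y. db (c y $ i) *\<^sub>R (Jc y $ i))" for i
  proof (rule lipschitz_near_scaleR)
    have "lipschitz_near z (\<lambda>y. c y $ i)"
      by (rule lipschitz_near_compose[OF c component])
    then show "lipschitz_near z (\<lambda>y. db (c y $ i))"
      using lipschitz_near_compose db by fastforce
    show "lipschitz_near z (\<lambda>y. Jc y $ i)"
      by (rule lipschitz_near_compose[OF Jc component])
  qed
  then have "lipschitz_near z (\<lambda>y. \<mu> *\<^sub>R (\<Sum>i\<in>UNIV. db (c y $ i) *\<^sub>R (Jc y $ i)))"
    by (intro lipschitz_near_scaleR[OF lipschitz_near_const] lipschitz_near_sum)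
  moreover have "lipschitz_near z gradf"
    using \<open>loc_lipschitz gradf\<close> unfolding loc_lipschitz_iff_lipschitz_near ..
  ultimately show ?thesis
    unfolding gradfmu_def[abs_def] by (rule lipschitz_near_add[rotated])
qed

definition fmu :: "('a \<Rightarrow> real) \<Rightarrow> (real \<Rightarrow> real) \<Rightarrow> ('a \<Rightarrow> real ^ 'm::finite) \<Rightarrow> real \<Rightarrow> 'a \<Rightarrow> real"
  where "fmu f b c \<mu> z = f z + \<mu> * (\<Sum>i\<in>UNIV. b (c z $ i))"

lemma qmu_eq_fmu: "z \<in> strict_feas c \<Longrightarrow> qmu f g b c \<mu> z = ereal (fmu f b c \<mu> z) + g z"
  by (simp add: qmu_def fmu_def)

lemma fmu_has_derivative:
  fixes f :: "real ^ 'n \<Rightarrow> real" and gradf :: "real ^ 'n \<Rightarrow> real ^ 'n"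
    and c :: "real ^ 'n \<Rightarrow> real ^ 'm" and Jc :: "real ^ 'n \<Rightarrow> real ^ 'n ^ 'm"
    and b db :: "real \<Rightarrow> real"
  assumes f_grad: "\<And>x. (f has_derivative (\<lambda>h. gradf x \<bullet> h)) (at x)"
    and c_jac: "\<And>x. (c has_derivative (\<lambda>h. Jc x *v h)) (at x)"
    and b_deriv: "\<And>t. t < 0 \<Longrightarrow> (b has_real_derivative db t) (at t)"
    and "y \<in> strict_feas c"
  shows "(fmu f b c \<mu> has_derivative (\<lambda>h. gradfmu gradf db c Jc \<mu> y \<bullet> h)) (at y)"
proof -
  have ci: "((\<lambda>y. c y $ i) has_derivative (\<lambda>h. (Jc y *v h) $ i)) (at y)" for i
    using bounded_linear.has_derivative[OF bounded_linear_vec_nth c_jac] .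
  have bi: "((\<lambda>y. b (c y $ i)) has_derivative (\<lambda>h. db (c y $ i) * (Jc y *v h) $ i)) (at y)" for i
  proof -
    have "c y $ i < 0" using \<open>y \<in> strict_feas c\<close> unfolding strict_feas_def by auto
    then have "(b has_derivative (\<lambda>h. db (c y $ i) * h)) (at (c y $ i))"
      using b_deriv unfolding has_field_derivative_def by auto
    from has_derivative_compose[OF ci this] show ?thesis .
  qed
  have "((\<lambda>y. f y + \<mu> * (\<Sum>i\<in>UNIV. b (c y $ i))) has_derivative
        (\<lambda>h. gradf y \<bullet> h + \<mu> * (\<Sum>i\<in>UNIV. db (c y $ i) * (Jc y *v h) $ i))) (at y)"
    by (intro has_derivative_add f_grad has_derivative_mult_right has_derivative_sum bi)
  moreover have "(\<lambda>h. gradf y \<bullet> h + \<mu> * (\<Sum>i\<in>UNIV. db (c y $ i) * (Jc y *v h) $ i))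
      = (\<lambda>h. gradfmu gradf db c Jc \<mu> y \<bullet> h)"
    unfolding gradfmu_def
    by (auto simp: inner_add_left inner_sum_left matrix_vector_mul_component)
  ultimately show ?thesis unfolding fmu_def[abs_def] by simp
qed

lemma proper_fun_finite_on_edom:
  assumes "proper_fun g" "z \<in> edom (\<lambda>x. ereal (f x) + g x)"
  obtains gz where "g z = ereal gz"
  using assms unfolding proper_fun_def edom_def by (cases "g z") auto

section \<open>Proximal gradient steps\<close>

lemma prox_threshold_exceeds:
  assumes "ereal \<gamma>0 < prox_threshold g"
  obtains \<gamma>1 where "\<gamma>0 < \<gamma>1" "prox_bdd_with g \<gamma>1"
  using assms unfolding prox_threshold_def by (auto simp: less_Sup_iff)

lemma norm_add_sq_le_weighted:
  fixes u v :: "'a::real_normed_vector"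
  assumes "e > 0"
  shows "norm (u + v) ^ 2 \<le> (1 + e) * norm u ^ 2 + (1 + 1 / e) * norm v ^ 2"
proof -
  have "0 \<le> (e * norm u - norm v) ^ 2 / e" using assms by simp
  then have "2 * norm u * norm v \<le> e * norm u ^ 2 + norm v ^ 2 / e"
    using assms by (simp add: field_simps power2_eq_square)
  moreover have "norm (u + v) ^ 2 \<le> (norm u + norm v) ^ 2"
    by (simp add: norm_triangle_ineq power_mono)
  ultimately show ?thesis by (simp add: power2_eq_square field_simps)
qed

lemma inner_le_weighted:
  fixes v d :: "'a::real_inner"
  assumes "\<gamma> > 0"
  shows "\<bar>v \<bullet> d\<bar> \<le> \<gamma> * norm v ^ 2 + norm d ^ 2 / (4 * \<gamma>)"
proof -
  have "0 \<le> (2 * \<gamma> * norm v - norm d) ^ 2 / (4 * \<gamma>)" using assms by simp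
  then have "norm v * norm d \<le> \<gamma> * norm v ^ 2 + norm d ^ 2 / (4 * \<gamma>)"
    using assms by (simp add: field_simps power2_eq_square)
  then show ?thesis
    using Cauchy_Schwarz_ineq2[of v d] by linarith
qed

lemma lsc_fun_add_continuous:
  fixes g :: "'a::topological_space \<Rightarrow> ereal" and \<phi> :: "'a \<Rightarrow> real"
  assumes "lsc_fun g" "continuous_on UNIV \<phi>"
  shows "lsc_fun (\<lambda>u. g u + ereal (\<phi> u))"
  unfolding lsc_fun_def
proof (intro allI impI)
  fix X :: "nat \<Rightarrow> 'a" and x assume "X \<longlonglongrightarrow> x"
  then have "(\<lambda>k. ereal (\<phi> (X k))) \<longlonglongrightarrow> ereal (\<phi> x)"
    using assms(2) by (intro tendsto_ereal) (auto intro: continuous_on_tendsto_compose)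
  then have lim: "liminf (\<lambda>k. ereal (\<phi> (X k)) + g (X k)) = ereal (\<phi> x) + liminf (\<lambda>k. g (X k))"
    by (rule ereal_liminf_lim_add) simp
  have "g x \<le> liminf (\<lambda>k. g (X k))"
    using assms(1) \<open>X \<longlonglongrightarrow> x\<close> unfolding lsc_fun_def by blast
  then have "g x + ereal (\<phi> x) \<le> liminf (\<lambda>k. g (X k)) + ereal (\<phi> x)"
    by (rule add_right_mono)
  also have "\<dots> = liminf (\<lambda>k. g (X k) + ereal (\<phi> (X k)))"
    using lim by (simp add: add.commute)
  finally show "g x + ereal (\<phi> x) \<le> liminf (\<lambda>k. g (X k) + ereal (\<phi> (X k)))" .
qed

lemma coercive_minimizing_sequence:
  fixes h :: "'a::real_normed_vector \<Rightarrow> ereal"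
  assumes "h u0 < \<infinity>" "\<kappa> > 0" and coercive: "\<And>u. ereal (\<kappa> * norm u ^ 2 + C) \<le> h u"
  obtains u where "bounded (range u)" "(\<lambda>k. h (u k)) \<longlonglongrightarrow> (INF u. h u)"
proof -
  define m where "m = (INF u. h u)"
  have "ereal C \<le> h u" for u
  proof -
    have "ereal C \<le> ereal (\<kappa> * norm u ^ 2 + C)"
      using \<open>\<kappa> > 0\<close> by simp
    then show ?thesis using coercive[of u] by (rule order_trans)
  qed
  then have "ereal C \<le> m"
    unfolding m_def by (rule INF_greatest)
  moreover have "m < \<infinity>"
    unfolding m_def using \<open>h u0 < \<infinity>\<close> by (meson INF_lower UNIV_I le_less_trans)
  ultimately obtain m' where m': "m = ereal m'"
    by (cases m) auto
  have "\<exists>u. h u < ereal (m' + inverse (real (Suc k)))" for k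
  proof -
    have "(INF u. h u) < ereal (m' + inverse (real (Suc k)))"
      using m' unfolding m_def by simp
    then show ?thesis by (simp add: INF_less_iff)
  qed
  then obtain u where u: "\<And>k. h (u k) < ereal (m' + inverse (real (Suc k)))"
    by metis
  have "bounded (range u)"
    unfolding bounded_iff
  proof (intro exI ballI)
    fix y assume "y \<in> range u"
    then obtain k where "y = u k" by blast
    have "ereal (\<kappa> * norm y ^ 2 + C) < ereal (m' + inverse (real (Suc k)))"
      using coercive[of y] u[of k] unfolding \<open>y = u k\<close> by (rule le_less_trans)
    moreover have "inverse (real (Suc k)) \<le> 1" by (simp add: inverse_le_1_iff)
    ultimately have "\<kappa> * norm y ^ 2 + C \<le> m' + 1"
      by simp
    then have "norm y ^ 2 \<le> (m' + 1 - C) / \<kappa>"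
      using \<open>\<kappa> > 0\<close> by (simp add: field_simps)
    then show "norm y \<le> sqrt ((m' + 1 - C) / \<kappa>)"
      by (rule real_le_rsqrt)
  qed
  moreover have "(\<lambda>k. h (u k)) \<longlonglongrightarrow> m"
  proof (rule tendsto_sandwich)
    show "\<forall>\<^sub>F k in sequentially. m \<le> h (u k)"
      unfolding m_def by (simp add: INF_lower)
    show "\<forall>\<^sub>F k in sequentially. h (u k) \<le> ereal (m' + inverse (real (Suc k)))"
      using u by (simp add: less_imp_le)
    have "(\<lambda>k. m' + inverse (real (Suc k))) \<longlonglongrightarrow> m' + 0"
      by (intro tendsto_add tendsto_const LIMSEQ_inverse_real_of_nat)
    then show "(\<lambda>k. ereal (m' + inverse (real (Suc k)))) \<longlonglongrightarrow> m"
      unfolding m' by simp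
  qed simp
  ultimately show thesis
    using that unfolding m_def by blast
qed

lemma lsc_fun_attains_min:
  fixes h :: "'a::{heine_borel,real_normed_vector} \<Rightarrow> ereal"
  assumes "lsc_fun h" "h u0 < \<infinity>" "\<kappa> > 0" and coercive: "\<And>u. ereal (\<kappa> * norm u ^ 2 + C) \<le> h u"
  obtains l where "\<And>v. h l \<le> h v"
proof -
  obtain u where "bounded (range u)" and u: "(\<lambda>k. h (u k)) \<longlonglongrightarrow> (INF u. h u)"
    using coercive_minimizing_sequence[OF assms(2,3) coercive] by blast
  then obtain l r where "strict_mono r" "(u \<circ> r) \<longlonglongrightarrow> l"
    using bounded_imp_convergent_subsequence by blast
  have "(\<lambda>k. h ((u \<circ> r) k)) \<longlonglongrightarrow> (INF u. h u)"
    using LIMSEQ_subseq_LIMSEQ[OF u \<open>strict_mono r\<close>] by (simp add: o_def)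
  then have "h l \<le> (INF u. h u)"
    using assms(1) \<open>(u \<circ> r) \<longlonglongrightarrow> l\<close> lim_imp_Liminf[OF trivial_limit_sequentially]
    unfolding lsc_fun_def by metis
  then show thesis
    using that by (meson INF_lower UNIV_I order_trans)
qed

lemma prox_objective_coercive:
  fixes g :: "'a::real_normed_vector \<Rightarrow> ereal"
  assumes "proper_fun g" "prox_bdd_with g \<gamma>1" "0 < \<gamma>" "\<gamma> < \<gamma>1"
  obtains \<kappa> C where "\<kappa> > 0" "\<And>u. ereal (\<kappa> * norm u ^ 2 + C) \<le> g u + ereal (norm (u - x) ^ 2 / (2 * \<gamma>))"
proof -
  obtain B where B: "\<And>u. ereal B \<le> g u + ereal (norm u ^ 2 / (2 * \<gamma>1))"
    using assms(2) unfolding prox_bdd_with_def by blast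
  \<comment> \<open>any \<gamma>2 strictly between \<gamma> and \<gamma>1 leaves the positive margin \<kappa> in the quadratic terms\<close>
  define \<gamma>2 where "\<gamma>2 = (\<gamma> + \<gamma>1) / 2"
  define e where "e = \<gamma>2 / \<gamma> - 1"
  define \<kappa> where "\<kappa> = 1 / (2 * \<gamma>2) - 1 / (2 * \<gamma>1)"
  define K where "K = (1 + 1 / e) * norm x ^ 2 / (2 * \<gamma>2)"
  have "0 < \<gamma>2" "\<gamma>2 < \<gamma>1" "e > 0"
    using assms(3,4) by (simp_all add: \<gamma>2_def e_def field_simps)
  then have "\<kappa> > 0"
    by (simp add: \<kappa>_def frac_less2)
  have "ereal (\<kappa> * norm u ^ 2 + (B - K)) \<le> g u + ereal (norm (u - x) ^ 2 / (2 * \<gamma>))" for u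
  proof (cases "g u")
    case (real gu)
    have "norm u ^ 2 \<le> (1 + e) * norm (u - x) ^ 2 + (1 + 1 / e) * norm x ^ 2"
      using norm_add_sq_le_weighted[OF \<open>e > 0\<close>, of "u - x" x] by simp
    then have "norm u ^ 2 / (2 * \<gamma>2)
        \<le> ((1 + e) * norm (u - x) ^ 2 + (1 + 1 / e) * norm x ^ 2) / (2 * \<gamma>2)"
      using \<open>0 < \<gamma>2\<close> by (simp add: divide_right_mono)
    also have "\<dots> = norm (u - x) ^ 2 / (2 * \<gamma>) + K"
      using assms(3) \<open>0 < \<gamma>2\<close> by (simp add: e_def K_def field_simps)
    finally have "norm u ^ 2 / (2 * \<gamma>2) \<le> norm (u - x) ^ 2 / (2 * \<gamma>) + K" .
    moreover have "B \<le> gu + norm u ^ 2 / (2 * \<gamma>1)"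
      using B[of u] real by simp
    ultimately show ?thesis
      using real by (simp add: \<kappa>_def algebra_simps)
  next
    case PInf
    then show ?thesis by simp
  next
    case MInf
    then show ?thesis using assms(1) unfolding proper_fun_def by blast
  qed
  then show thesis using that \<open>\<kappa> > 0\<close> by blast
qed

lemma prox_nonempty:
  fixes g :: "'a::euclidean_space \<Rightarrow> ereal"
  assumes "proper_fun g" "lsc_fun g" "prox_bdd_with g \<gamma>1" "0 < \<gamma>" "\<gamma> < \<gamma>1"
  shows "prox \<gamma> g x \<noteq> {}"
proof -
  define h where "h u = g u + ereal (norm (u - x) ^ 2 / (2 * \<gamma>))" for u
  obtain \<kappa> C where "\<kappa> > 0" and coercive: "\<And>u. ereal (\<kappa> * norm u ^ 2 + C) \<le> h u"
    using prox_objective_coercive[OF assms(1,3,4,5)] unfolding h_def by blast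
  obtain u0 where "g u0 < \<infinity>"
    using assms(1) unfolding proper_fun_def by blast
  then have "h u0 < \<infinity>"
    by (simp add: h_def)
  moreover have "lsc_fun h"
    unfolding h_def[abs_def] using assms(4)
    by (intro lsc_fun_add_continuous assms(2) continuous_intros) auto
  ultimately obtain l where "\<And>v. h l \<le> h v"
    using lsc_fun_attains_min[OF _ _ \<open>\<kappa> > 0\<close> coercive] by blast
  then have "l \<in> prox \<gamma> g x"
    unfolding prox_def h_def by blast
  then show ?thesis by blast
qed

lemma prox_gradient_step_ineq:
  fixes g :: "'a::real_inner \<Rightarrow> ereal"
  assumes "proper_fun g" "g z = ereal gz" "\<gamma> > 0" "w \<in> prox \<gamma> g (z - \<gamma> *\<^sub>R v)"
  obtains gw where "g w = ereal gw" "gw + v \<bullet> (w - z) + norm (w - z) ^ 2 / (2 * \<gamma>) \<le> gz"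
proof -
  define x where "x = z - \<gamma> *\<^sub>R v"
  have prox_ineq: "g w + ereal (norm (w - x) ^ 2 / (2 * \<gamma>)) \<le> g z + ereal (norm (z - x) ^ 2 / (2 * \<gamma>))"
    using assms(4) unfolding prox_def x_def by blast
  have "g w \<noteq> -\<infinity>" using assms(1) unfolding proper_fun_def by blast
  moreover have "g w \<noteq> \<infinity>" using prox_ineq assms(2) by auto
  ultimately obtain gw where gw: "g w = ereal gw" by (cases "g w") auto
  have "norm (w - x) ^ 2 = norm (w - z) ^ 2 + 2 * \<gamma> * (v \<bullet> (w - z)) + \<gamma>\<^sup>2 * norm v ^ 2"
    unfolding x_def power2_norm_eq_inner
    by (simp add: inner_commute power2_eq_square algebra_simps)
  moreover have "norm (z - x) ^ 2 = \<gamma>\<^sup>2 * norm v ^ 2"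
    using assms(3) by (simp add: x_def power_mult_distrib)
  moreover have "gw + norm (w - x) ^ 2 / (2 * \<gamma>) \<le> gz + norm (z - x) ^ 2 / (2 * \<gamma>)"
    using prox_ineq gw assms(2) by simp
  ultimately have "gw + v \<bullet> (w - z) + norm (w - z) ^ 2 / (2 * \<gamma>) \<le> gz"
    using assms(3) by (simp add: add_divide_distrib power2_eq_square)
  then show thesis using that gw by blast
qed

lemma prox_gradient_step_dist_sq_le:
  fixes g :: "'a::real_inner \<Rightarrow> ereal"
  assumes "proper_fun g" "prox_bdd_with g \<gamma>1" "\<gamma>1 > 0" "g z = ereal gz"
  obtains C where "\<And>\<gamma> w. 0 < \<gamma> \<Longrightarrow> \<gamma> \<le> 1 \<Longrightarrow> 8 * \<gamma> \<le> \<gamma>1 \<Longrightarrow> w \<in> prox \<gamma> g (z - \<gamma> *\<^sub>R v) \<Longrightarrow>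
      norm (w - z) ^ 2 \<le> C * \<gamma>"
proof -
  obtain B where B: "\<And>u. ereal B \<le> g u + ereal (norm u ^ 2 / (2 * \<gamma>1))"
    using assms(2) unfolding prox_bdd_with_def by blast
  define A where "A = gz - B + norm z ^ 2 / \<gamma>1"
  have "norm (w - z) ^ 2 \<le> 8 * (\<bar>A\<bar> + norm v ^ 2) * \<gamma>"
    if step: "0 < \<gamma>" "\<gamma> \<le> 1" "8 * \<gamma> \<le> \<gamma>1" "w \<in> prox \<gamma> g (z - \<gamma> *\<^sub>R v)" for \<gamma> w
  proof -
    define P where "P = norm (w - z) ^ 2"
    obtain gw where gw: "g w = ereal gw" "gw + v \<bullet> (w - z) + P / (2 * \<gamma>) \<le> gz"
      using prox_gradient_step_ineq[OF assms(1,4) \<open>0 < \<gamma>\<close> step(4)] unfolding P_def by blast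
    have "norm w ^ 2 \<le> 2 * norm z ^ 2 + 2 * P"
      using norm_add_sq_le_weighted[of 1 z "w - z"] by (simp add: P_def)
    then have "norm w ^ 2 / (2 * \<gamma>1) \<le> norm z ^ 2 / \<gamma>1 + P / \<gamma>1"
      using \<open>\<gamma>1 > 0\<close> by (simp add: field_simps)
    also have "P / \<gamma>1 \<le> P / (8 * \<gamma>)"
      using step(1,3) by (simp add: P_def frac_le)
    finally have "B \<le> gw + norm z ^ 2 / \<gamma>1 + P / (8 * \<gamma>)"
      using B[of w] gw(1) by simp
    moreover have "- (v \<bullet> (w - z)) \<le> \<gamma> * norm v ^ 2 + P / (4 * \<gamma>)"
      using inner_le_weighted[OF \<open>0 < \<gamma>\<close>, of v "w - z"] unfolding P_def by linarith
    ultimately have "P / (2 * \<gamma>) - P / (8 * \<gamma>) - P / (4 * \<gamma>) \<le> A + \<gamma> * norm v ^ 2"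
      using gw(2) unfolding A_def by linarith
    then have "P \<le> 8 * \<gamma> * (A + \<gamma> * norm v ^ 2)"
      using \<open>0 < \<gamma>\<close> by (simp add: field_simps)
    also have "\<dots> \<le> 8 * \<gamma> * (\<bar>A\<bar> + norm v ^ 2)"
      using step(1,2) by (intro mult_left_mono add_mono) (auto simp: mult_left_le_one_le)
    finally show ?thesis by (simp add: P_def algebra_simps)
  qed
  then show thesis using that by blast
qed

section \<open>The IP-FB iteration\<close>

lemma ipfb_accept_in_lipschitz_ball:
  fixes f :: "real ^ 'n \<Rightarrow> real" and gradf :: "real ^ 'n \<Rightarrow> real ^ 'n"
    and g :: "real ^ 'n \<Rightarrow> ereal"
    and c :: "real ^ 'n \<Rightarrow> real ^ 'm" and Jc :: "real ^ 'n \<Rightarrow> real ^ 'n ^ 'm"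
    and b db :: "real \<Rightarrow> real" and \<mu> :: real
  assumes f_grad: "\<And>x. (f has_derivative (\<lambda>h. gradf x \<bullet> h)) (at x)"
    and c_jac: "\<And>x. (c has_derivative (\<lambda>h. Jc x *v h)) (at x)"
    and b_deriv: "\<And>t. t < 0 \<Longrightarrow> (b has_real_derivative db t) (at t)"
    and "proper_fun g" "g z = ereal gz"
    and ball: "ball z r \<subseteq> strict_feas c" and lip: "L-lipschitz_on (ball z r) (gradfmu gradf db c Jc \<mu>)"
    and "\<gamma> > 0" "2 * \<gamma> * L \<le> \<alpha>"
    and "w \<in> Tmap g (gradfmu gradf db c Jc \<mu>) \<gamma> z" "w \<in> ball z r"
  shows "ipfb_accept c (qmu f g b c \<mu>) (gradfmu gradf db c Jc \<mu>) \<alpha> \<gamma> z w"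
proof -
  let ?G = "gradfmu gradf db c Jc \<mu>"
  define d where "d = w - z"
  have "z \<in> ball z r"
    using \<open>w \<in> ball z r\<close> by (metis centre_in_ball mem_ball zero_le_dist le_less_trans)
  obtain gw where gw: "g w = ereal gw" "gw + ?G z \<bullet> d + norm d ^ 2 / (2 * \<gamma>) \<le> gz"
    using prox_gradient_step_ineq[OF \<open>proper_fun g\<close> \<open>g z = ereal gz\<close> \<open>\<gamma> > 0\<close>] \<open>w \<in> Tmap g ?G \<gamma> z\<close>
    unfolding Tmap_def d_def by blast
  have "L \<ge> 0" using lipschitz_on_nonneg[OF lip] .
  have L_le: "L \<le> \<alpha> / (2 * \<gamma>)"
    using \<open>\<gamma> > 0\<close> \<open>2 * \<gamma> * L \<le> \<alpha>\<close> by (simp add: field_simps)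
  have "w \<in> strict_feas c" "z \<in> strict_feas c"
    using ball \<open>w \<in> ball z r\<close> \<open>z \<in> ball z r\<close> by auto
  have "norm (?G w - ?G z) \<le> L * norm d"
    using lipschitz_on_normD[OF lip \<open>w \<in> ball z r\<close> \<open>z \<in> ball z r\<close>] by (simp add: d_def)
  also have "\<dots> \<le> \<alpha> / \<gamma> * norm d"
  proof (rule mult_right_mono)
    have "0 \<le> L * \<gamma>" using \<open>L \<ge> 0\<close> \<open>\<gamma> > 0\<close> by simp
    then show "L \<le> \<alpha> / \<gamma>"
      using \<open>\<gamma> > 0\<close> \<open>2 * \<gamma> * L \<le> \<alpha>\<close> by (simp add: field_simps)
  qed simp
  finally have grad_ok: "norm (?G w - ?G z) \<le> \<alpha> / \<gamma> * norm d" .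
  have "fmu f b c \<mu> w \<le> fmu f b c \<mu> z + ?G z \<bullet> d + L * norm d ^ 2"
    unfolding d_def
    by (rule lipschitz_gradient_upper_bound[OF fmu_has_derivative[OF f_grad c_jac b_deriv]
          lip \<open>w \<in> ball z r\<close>]) (use ball in auto)
  moreover have "L * norm d ^ 2 \<le> \<alpha> / (2 * \<gamma>) * norm d ^ 2"
    using mult_right_mono[OF L_le, of "norm d ^ 2"] by simp
  moreover have "\<alpha> / (2 * \<gamma>) * norm d ^ 2 - norm d ^ 2 / (2 * \<gamma>) = - ((1 - \<alpha>) / (2 * \<gamma>) * norm d ^ 2)"
    using \<open>\<gamma> > 0\<close> by (simp add: field_simps)
  ultimately have "fmu f b c \<mu> w + gw \<le> fmu f b c \<mu> z + gz - (1 - \<alpha>) / (2 * \<gamma>) * norm d ^ 2"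
    using gw(2) by linarith
  then have "qmu f g b c \<mu> w \<le> qmu f g b c \<mu> z - ereal ((1 - \<alpha>) / (2 * \<gamma>) * norm d ^ 2)"
    using qmu_eq_fmu[OF \<open>w \<in> strict_feas c\<close>] qmu_eq_fmu[OF \<open>z \<in> strict_feas c\<close>] gw(1) \<open>g z = ereal gz\<close>
    by simp
  then show ?thesis
    using \<open>w \<in> strict_feas c\<close> grad_ok unfolding ipfb_accept_def strict_feas_def d_def by blast
qed

lemma ipfb_accept_small_stepsize:
  fixes f :: "real ^ 'n \<Rightarrow> real" and gradf :: "real ^ 'n \<Rightarrow> real ^ 'n"
    and g :: "real ^ 'n \<Rightarrow> ereal"
    and c :: "real ^ 'n \<Rightarrow> real ^ 'm" and Jc :: "real ^ 'n \<Rightarrow> real ^ 'n ^ 'm"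
    and b db :: "real \<Rightarrow> real" and \<mu> :: real
  assumes f_grad: "\<And>x. (f has_derivative (\<lambda>h. gradf x \<bullet> h)) (at x)"
    and f_lip: "loc_lipschitz gradf"
    and g_proper: "proper_fun g"
    and c_jac: "\<And>x. (c has_derivative (\<lambda>h. Jc x *v h)) (at x)"
    and c_lip: "loc_lipschitz Jc"
    and b_deriv: "\<And>t. t < 0 \<Longrightarrow> (b has_real_derivative db t) (at t)"
    and db_C1: "\<exists>ddb. (\<forall>t<0. (db has_real_derivative ddb t) (at t)) \<and> continuous_on {..<0} ddb"
    and "prox_bdd_with g \<gamma>1" "\<gamma>1 > 0" "\<alpha> > 0"
    and "z \<in> strict_feas c" "g z = ereal gz"
  obtains \<delta> where "\<delta> > 0"
    "\<And>\<gamma> w. 0 < \<gamma> \<Longrightarrow> \<gamma> < \<delta> \<Longrightarrow> w \<in> Tmap g (gradfmu gradf db c Jc \<mu>) \<gamma> z \<Longrightarrow>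
        ipfb_accept c (qmu f g b c \<mu>) (gradfmu gradf db c Jc \<mu>) \<alpha> \<gamma> z w"
proof -
  let ?G = "gradfmu gradf db c Jc \<mu>"
  have "continuous_on UNIV c"
    using c_jac by (intro has_derivative_continuous_on) (auto intro: has_derivative_at_withinI)
  then have "open (strict_feas c)"
    by (rule open_strict_feas)
  then obtain r L where "r > 0" and ball: "ball z r \<subseteq> strict_feas c" and lip: "L-lipschitz_on (ball z r) ?G"
    using lipschitz_near_shrink[OF gradfmu_lipschitz_near[OF f_lip c_jac c_lip db_C1 \<open>z \<in> strict_feas c\<close>]]
      \<open>z \<in> strict_feas c\<close> by metis
  obtain C where C: "\<And>\<gamma> w. 0 < \<gamma> \<Longrightarrow> \<gamma> \<le> 1 \<Longrightarrow> 8 * \<gamma> \<le> \<gamma>1 \<Longrightarrow> w \<in> prox \<gamma> g (z - \<gamma> *\<^sub>R ?G z) \<Longrightarrow>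
      norm (w - z) ^ 2 \<le> C * \<gamma>"
    using prox_gradient_step_dist_sq_le[OF g_proper \<open>prox_bdd_with g \<gamma>1\<close> \<open>\<gamma>1 > 0\<close> \<open>g z = ereal gz\<close>] by blast
  have "L \<ge> 0" using lipschitz_on_nonneg[OF lip] .
  define \<delta> where "\<delta> = min (min 1 (\<gamma>1 / 8)) (min (\<alpha> / (2 * (L + 1))) (r\<^sup>2 / (\<bar>C\<bar> + 1)))"
  show thesis
  proof (rule that)
    show "\<delta> > 0"
      using \<open>\<gamma>1 > 0\<close> \<open>\<alpha> > 0\<close> \<open>L \<ge> 0\<close> \<open>r > 0\<close> by (simp add: \<delta>_def)
    fix \<gamma> w assume "0 < \<gamma>" "\<gamma> < \<delta>" and w: "w \<in> Tmap g ?G \<gamma> z"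
    then have "\<gamma> < r\<^sup>2 / (\<bar>C\<bar> + 1)" "\<gamma> < \<alpha> / (2 * (L + 1))"
      by (simp_all add: \<delta>_def)
    have "norm (w - z) ^ 2 \<le> C * \<gamma>"
      using C[OF \<open>0 < \<gamma>\<close>] w \<open>\<gamma> < \<delta>\<close> unfolding Tmap_def \<delta>_def by auto
    also have "\<dots> \<le> (\<bar>C\<bar> + 1) * \<gamma>"
      using \<open>0 < \<gamma>\<close> by (intro mult_right_mono) auto
    also have "\<dots> < r\<^sup>2"
      using \<open>\<gamma> < r\<^sup>2 / (\<bar>C\<bar> + 1)\<close> by (simp add: field_simps add_pos_nonneg)
    finally have "w \<in> ball z r"
      using \<open>r > 0\<close> by (simp add: dist_norm norm_minus_commute power_less_imp_less_base)
    moreover have "2 * \<gamma> * L \<le> \<alpha>"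
      using \<open>\<gamma> < \<alpha> / (2 * (L + 1))\<close> \<open>L \<ge> 0\<close> \<open>0 < \<gamma>\<close> by (simp add: field_simps)
    ultimately show "ipfb_accept c (qmu f g b c \<mu>) ?G \<alpha> \<gamma> z w"
      using ipfb_accept_in_lipschitz_ball[OF f_grad c_jac b_deriv g_proper \<open>g z = ereal gz\<close> ball lip
          \<open>0 < \<gamma>\<close> _ w] by blast
  qed
qed

lemma ipfb_backtracking_finite:
  fixes f :: "real ^ 'n \<Rightarrow> real" and gradf :: "real ^ 'n \<Rightarrow> real ^ 'n"
    and g :: "real ^ 'n \<Rightarrow> ereal"
    and c :: "real ^ 'n \<Rightarrow> real ^ 'm" and Jc :: "real ^ 'n \<Rightarrow> real ^ 'n ^ 'm"
    and b db :: "real \<Rightarrow> real" and \<mu> :: real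
  assumes f_grad: "\<And>x. (f has_derivative (\<lambda>h. gradf x \<bullet> h)) (at x)"
    and f_lip: "loc_lipschitz gradf"
    and g_proper: "proper_fun g" and g_lsc: "lsc_fun g"
    and c_jac: "\<And>x. (c has_derivative (\<lambda>h. Jc x *v h)) (at x)"
    and c_lip: "loc_lipschitz Jc"
    and b_deriv: "\<And>t. t < 0 \<Longrightarrow> (b has_real_derivative db t) (at t)"
    and db_C1: "\<exists>ddb. (\<forall>t<0. (db has_real_derivative ddb t) (at t)) \<and> continuous_on {..<0} ddb"
    and "prox_bdd_with g \<gamma>1" "\<alpha> > 0" "0 < \<beta>" "\<beta> < 1"
    and z: "z \<in> edom (\<lambda>x. ereal (f x) + g x) \<inter> strict_feas c" and "0 < \<gamma>" "\<gamma> < \<gamma>1"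
  shows "(\<forall>i::nat. Tmap g (gradfmu gradf db c Jc \<mu>) (\<beta> ^ i * \<gamma>) z \<noteq> {})
      \<and> \<not> (\<exists>w. \<forall>i::nat. w i \<in> Tmap g (gradfmu gradf db c Jc \<mu>) (\<beta> ^ i * \<gamma>) z
                 \<and> \<not> ipfb_accept c (qmu f g b c \<mu>) (gradfmu gradf db c Jc \<mu>) \<alpha> (\<beta> ^ i * \<gamma>) z (w i))"
proof
  have step: "0 < \<beta> ^ i * \<gamma>" "\<beta> ^ i * \<gamma> < \<gamma>1" for i :: nat
    using \<open>0 < \<beta>\<close> \<open>\<beta> < 1\<close> \<open>0 < \<gamma>\<close> \<open>\<gamma> < \<gamma>1\<close>
    by (auto intro: le_less_trans[OF mult_left_le_one_le] simp: power_le_one)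
  show "\<forall>i::nat. Tmap g (gradfmu gradf db c Jc \<mu>) (\<beta> ^ i * \<gamma>) z \<noteq> {}"
    using prox_nonempty[OF g_proper g_lsc \<open>prox_bdd_with g \<gamma>1\<close> step] unfolding Tmap_def by blast
  have "\<gamma>1 > 0" using \<open>0 < \<gamma>\<close> \<open>\<gamma> < \<gamma>1\<close> by simp
  obtain gz where "g z = ereal gz"
    using proper_fun_finite_on_edom[OF g_proper] z by blast
  have "z \<in> strict_feas c" using z by blast
  obtain \<delta> where "\<delta> > 0" and accept:
    "\<And>\<gamma> w. 0 < \<gamma> \<Longrightarrow> \<gamma> < \<delta> \<Longrightarrow> w \<in> Tmap g (gradfmu gradf db c Jc \<mu>) \<gamma> z \<Longrightarrow>
        ipfb_accept c (qmu f g b c \<mu>) (gradfmu gradf db c Jc \<mu>) \<alpha> \<gamma> z w"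
    using ipfb_accept_small_stepsize[OF f_grad f_lip g_proper c_jac c_lip b_deriv db_C1
        \<open>prox_bdd_with g \<gamma>1\<close> \<open>\<gamma>1 > 0\<close> \<open>\<alpha> > 0\<close> \<open>z \<in> strict_feas c\<close> \<open>g z = ereal gz\<close>] by blast
  obtain n where "\<beta> ^ n < \<delta> / \<gamma>"
    using real_arch_pow_inv[of "\<delta> / \<gamma>" \<beta>] \<open>\<delta> > 0\<close> \<open>0 < \<gamma>\<close> \<open>\<beta> < 1\<close> by auto
  then have "\<beta> ^ n * \<gamma> < \<delta>"
    using \<open>0 < \<gamma>\<close> by (simp add: pos_less_divide_eq)
  then show "\<not> (\<exists>w. \<forall>i::nat. w i \<in> Tmap g (gradfmu gradf db c Jc \<mu>) (\<beta> ^ i * \<gamma>) z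
                 \<and> \<not> ipfb_accept c (qmu f g b c \<mu>) (gradfmu gradf db c Jc \<mu>) \<alpha> (\<beta> ^ i * \<gamma>) z (w i))"
    using accept step(1) by blast
qed

lemma ipfb_run_stepsize_pos:
  assumes "ipfb_run g c qm G \<alpha> \<beta> \<gamma>0 \<epsilon> z0 N z zb \<gamma>" "\<gamma>0 > 0" "\<beta> > 0" "j < N"
  shows "\<gamma> j > 0"
proof -
  have backtracked: "\<exists>k. \<gamma> j = \<beta> ^ k * (if j = 0 then \<gamma>0 else \<gamma> (j - 1))" if "j < N" for j
    using assms(1) that unfolding ipfb_run_def by blast
  show ?thesis
    using \<open>j < N\<close>
  proof (induction j)
    case 0
    then show ?case using backtracked[of 0] assms(2,3) by auto
  next
    case (Suc j)
    then show ?case using backtracked[of "Suc j"] assms(3) by auto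
  qed
qed

lemma ipfb_run_descent:
  assumes run: "ipfb_run g c qm G \<alpha> \<beta> \<gamma>0 \<epsilon> z0 N z zb \<gamma>" and "\<gamma>0 > 0" "\<beta> > 0" "\<alpha> \<le> 1"
  shows "(\<forall>j. 1 \<le> j \<and> j < N \<longrightarrow>
            z j = zb (j - 1)
          \<and> qm (z j) = qm (zb (j - 1))
          \<and> qm (zb (j - 1)) \<le> qm (z (j - 1))
               - ereal ((1 - \<alpha>) / (2 * \<gamma> (j - 1)) * norm (zb (j - 1) - z (j - 1)) ^ 2))
      \<and> (\<forall>j<N. qm (zb j) \<le> qm z0)"
proof -
  have start: "z 0 = z0" and next_iterate: "\<And>j. Suc j < N \<Longrightarrow> z (Suc j) = zb j"
    using run unfolding ipfb_run_def by blast+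
  have sufficient_decrease:
    "qm (zb j) \<le> qm (z j) - ereal ((1 - \<alpha>) / (2 * \<gamma> j) * norm (zb j - z j) ^ 2)" if "j < N" for j
    using run that unfolding ipfb_run_def ipfb_accept_def by blast
  have decrease: "qm (zb j) \<le> qm (z j)" if "j < N" for j
  proof -
    have "0 \<le> (1 - \<alpha>) / (2 * \<gamma> j) * norm (zb j - z j) ^ 2"
      using ipfb_run_stepsize_pos[OF run \<open>\<gamma>0 > 0\<close> \<open>\<beta> > 0\<close> that] \<open>\<alpha> \<le> 1\<close> by simp
    then have "qm (z j) - ereal ((1 - \<alpha>) / (2 * \<gamma> j) * norm (zb j - z j) ^ 2) \<le> qm (z j)"
      by (cases "qm (z j)") auto
    then show ?thesis using sufficient_decrease[OF that] by (rule order_trans[rotated])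
  qed
  have iterate_sublevel: "qm (z j) \<le> qm z0" if "j < N" for j
    using that
  proof (induction j)
    case 0
    then show ?case using start by simp
  next
    case (Suc j)
    then have "qm (z (Suc j)) = qm (zb j)" using next_iterate by simp
    also have "\<dots> \<le> qm (z j)" using decrease Suc by simp
    also have "\<dots> \<le> qm z0" using Suc by simp
    finally show ?case .
  qed
  show ?thesis
  proof (intro conjI allI impI)
    fix j assume "1 \<le> j \<and> j < N"
    then have "Suc (j - 1) < N" "j - 1 < N" by auto
    show "z j = zb (j - 1)" "qm (z j) = qm (zb (j - 1))"
      using next_iterate[OF \<open>Suc (j - 1) < N\<close>] \<open>1 \<le> j \<and> j < N\<close> by simp_all
    show "qm (zb (j - 1)) \<le> qm (z (j - 1))
        - ereal ((1 - \<alpha>) / (2 * \<gamma> (j - 1)) * norm (zb (j - 1) - z (j - 1)) ^ 2)"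
      using sufficient_decrease[OF \<open>j - 1 < N\<close>] .
  next
    fix j assume "j < N"
    then show "qm (zb j) \<le> qm z0"
      using decrease iterate_sublevel order_trans by blast
  qed
qed

theorem lemma3p4:
  fixes f :: "real ^ 'n \<Rightarrow> real" and gradf :: "real ^ 'n \<Rightarrow> real ^ 'n"
    and g :: "real ^ 'n \<Rightarrow> ereal"
    and c :: "real ^ 'n \<Rightarrow> real ^ 'm" and Jc :: "real ^ 'n \<Rightarrow> real ^ 'n ^ 'm"
    and b db :: "real \<Rightarrow> real"
    and \<mu> \<epsilon> \<gamma>0 \<alpha> \<beta> :: real and z0 :: "real ^ 'n"
  assumes f_grad: "\<And>x. (f has_derivative (\<lambda>h. gradf x \<bullet> h)) (at x)"
    and f_lip: "loc_lipschitz gradf"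
    and g_proper: "proper_fun g" and g_lsc: "lsc_fun g" and g_pb: "prox_bounded g"
    and g_cont: "cont_rel_dom g"
    and c_jac: "\<And>x. (c has_derivative (\<lambda>h. Jc x *v h)) (at x)"
    and c_lip: "loc_lipschitz Jc"
    and q_inf: "\<bar>INF x\<in>{x. \<forall>i. c x $ i \<le> 0}. ereal (f x) + g x\<bar> \<noteq> \<infinity>"
    and F_ne: "edom (\<lambda>x. ereal (f x) + g x) \<inter> strict_feas c \<noteq> {}"
    and b_nonneg: "\<And>t. t < 0 \<Longrightarrow> b t \<ge> 0"
    and b_deriv: "\<And>t. t < 0 \<Longrightarrow> (b has_real_derivative db t) (at t)"
    and b_C2: "\<exists>ddb. (\<forall>t<0. (db has_real_derivative ddb t) (at t)) \<and> continuous_on {..<0} ddb"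
    and db_pos: "\<And>t. t < 0 \<Longrightarrow> db t > 0"
    and b_lim: "filterlim b at_top (at_left 0)"
    and mu_pos: "\<mu> > 0" and eps_pos: "\<epsilon> > 0"
    and z0_F: "z0 \<in> edom (\<lambda>x. ereal (f x) + g x) \<inter> strict_feas c"
    and gamma0: "\<gamma>0 > 0" "ereal \<gamma>0 < prox_threshold g"
    and alpha: "0 < \<alpha>" "\<alpha> < 1" and beta: "0 < \<beta>" "\<beta> < 1"
  shows
    \<comment> \<open>(i) backtracking from any point of F with any incoming stepsize in (0,\<gamma>0] is possible
        (T nonempty) and cannot go on forever\<close>
    "(\<forall>z \<in> edom (\<lambda>x. ereal (f x) + g x) \<inter> strict_feas c. \<forall>\<gamma>. 0 < \<gamma> \<and> \<gamma> \<le> \<gamma>0 \<longrightarrow>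
        (\<forall>i::nat. Tmap g (gradfmu gradf db c Jc \<mu>) (\<beta> ^ i * \<gamma>) z \<noteq> {})
      \<and> \<not> (\<exists>w. \<forall>i::nat. w i \<in> Tmap g (gradfmu gradf db c Jc \<mu>) (\<beta> ^ i * \<gamma>) z
                 \<and> \<not> ipfb_accept c (qmu f g b c \<mu>) (gradfmu gradf db c Jc \<mu>) \<alpha> (\<beta> ^ i * \<gamma>) z (w i)))
   \<and> (\<forall>N z zb \<gamma>. ipfb_run g c (qmu f g b c \<mu>) (gradfmu gradf db c Jc \<mu>) \<alpha> \<beta> \<gamma>0 \<epsilon> z0 N z zb \<gamma> \<longrightarrow>
        \<comment> \<open>(ii)\<close>
        (\<forall>j. 1 \<le> j \<and> j < N \<longrightarrow>
            z j = zb (j - 1)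
          \<and> qmu f g b c \<mu> (z j) = qmu f g b c \<mu> (zb (j - 1))
          \<and> qmu f g b c \<mu> (zb (j - 1)) \<le> qmu f g b c \<mu> (z (j - 1))
               - ereal ((1 - \<alpha>) / (2 * \<gamma> (j - 1)) * norm (zb (j - 1) - z (j - 1)) ^ 2))
        \<comment> \<open>(iii)\<close>
      \<and> (\<forall>j<N. qmu f g b c \<mu> (zb j) \<le> qmu f g b c \<mu> z0))
   \<and> qmu f g b c \<mu> z0 < \<infinity>"
proof -
  obtain \<gamma>1 where "\<gamma>0 < \<gamma>1" "prox_bdd_with g \<gamma>1"
    using prox_threshold_exceeds[OF gamma0(2)] .
  note backtracking = ipfb_backtracking_finite[OF f_grad f_lip g_proper g_lsc c_jac c_lip b_deriv b_C2
      \<open>prox_bdd_with g \<gamma>1\<close> alpha(1) beta]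
  note descent = ipfb_run_descent[OF _ gamma0(1) beta(1) less_imp_le[OF alpha(2)]]
  obtain gz where "g z0 = ereal gz"
    using proper_fun_finite_on_edom[OF g_proper] z0_F by blast
  moreover have "z0 \<in> strict_feas c" using z0_F by blast
  ultimately have "qmu f g b c \<mu> z0 < \<infinity>"
    by (simp add: qmu_eq_fmu)
  then show ?thesis
    using backtracking descent \<open>\<gamma>0 < \<gamma>1\<close> by (blast intro: le_less_trans)
qed

end
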